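(* Assume $K=o(\sqrt n)$, $\mathbb{E}_0(X_\Gamma)=\omega(1)$ and $\mathbb{E}_0(L^2)=1+o(1)$. Then every estimator $\hat{\mathcal K}$ of the planted set $\mathcal K$ satisfies $\mathrm{ov}(\hat{\mathcal K})=o(K)$.
   Context: Model: $n$ nodes; $\lambda>0$ fixed; $\Gamma$ a fixed graph on $K$ vertices. $\mathbb{P}_0$: $G\sim\mathcal G(n,\lambda/n)$. $\mathbb{P}_1$: $G=G_0\cup G'$, $G_0\sim\mathcal G(n,\lambda/n)$, $G'$ the image of $\Gamma$ under a uniformly random injection $\sigma$ of its vertices into $[n]$ independent of $G_0$; $\mathcal K$ is the image of $\sigma$. $X_\Gamma$ is the number of copies of $\Gamma$ in $G$ (subgraphs of $G$ isomorphic to $\Gamma$), $L=L(G)=\mathbb{P}_1(G)/\mathbb{P}_0(G)$ the likelihood ratio, and $\mathbb{E}_0$ expectation under $\mathbb{P}_0$. An estimator is a set $\hat{\mathcal K}$ of $K$ nodes computed from $G$; its overlap is $\mathrm{ov}(\hat{\mathcal K})=\sum_{i\in[n]}\mathbb{P}_1(i\in\hat{\mathcal K}\cap\mathcal K)$. Asymptotics as $n\to\infty$. *)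

theory Defs
  imports "HOL-Probability.Probability" "HOL-Library.Landau_Symbols"
begin

text \<open>Graphs on the vertex set [n] = {0..<n} are represented by their edge sets;
an edge is a 2-element subset of the vertex set.\<close>

definition graph_edges :: "nat \<Rightarrow> nat set set" where
  "graph_edges n = {e. e \<subseteq> {0..<n} \<and> card e = 2}"

definition ER_pmf :: "nat \<Rightarrow> real \<Rightarrow> nat set set pmf" where
  "ER_pmf n p = map_pmf (\<lambda>f. {e \<in> graph_edges n. f e})
                  (Pi_pmf (graph_edges n) False (\<lambda>_. bernoulli_pmf p))"

definition injs :: "nat \<Rightarrow> nat \<Rightarrow> (nat \<Rightarrow> nat) set" where
  "injs K n = {\<sigma> \<in> {0..<K} \<rightarrow>\<^sub>E {0..<n}. inj_on \<sigma> {0..<K}}"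

definition embed_edges :: "(nat \<Rightarrow> nat) \<Rightarrow> nat set set \<Rightarrow> nat set set" where
  "embed_edges \<sigma> E = (\<lambda>e. \<sigma> ` e) ` E"

definition planted_pmf :: "nat \<Rightarrow> real \<Rightarrow> nat \<Rightarrow> nat set set \<Rightarrow> (nat set set \<times> nat set) pmf" where
  "planted_pmf n p K \<Gamma> =
     bind_pmf (ER_pmf n p) (\<lambda>G0. bind_pmf (pmf_of_set (injs K n)) (\<lambda>\<sigma>.
       return_pmf (G0 \<union> embed_edges \<sigma> \<Gamma>, \<sigma> ` {0..<K})))"

text \<open>Number of copies of Gamma in G: subgraphs (vertex set, edge set) of G isomorphic to Gamma.\<close>
definition copies_count :: "nat \<Rightarrow> nat \<Rightarrow> nat set set \<Rightarrow> nat set set \<Rightarrow> nat" where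
  "copies_count n K \<Gamma> G =
     card {(\<sigma> ` {0..<K}, embed_edges \<sigma> \<Gamma>) | \<sigma>. \<sigma> \<in> injs K n \<and> embed_edges \<sigma> \<Gamma> \<subseteq> G}"

definition likelihood_ratio :: "nat \<Rightarrow> real \<Rightarrow> nat \<Rightarrow> nat set set \<Rightarrow> nat set set \<Rightarrow> real" where
  "likelihood_ratio n p K \<Gamma> G = pmf (map_pmf fst (planted_pmf n p K \<Gamma>)) G / pmf (ER_pmf n p) G"

definition overlap :: "nat \<Rightarrow> real \<Rightarrow> nat \<Rightarrow> nat set set \<Rightarrow> (nat set set \<Rightarrow> nat set) \<Rightarrow> real" where
  "overlap n p K \<Gamma> est =
     (\<Sum>i\<in>{0..<n}. measure_pmf.prob (planted_pmf n p K \<Gamma>) {(G, S). i \<in> est G \<inter> S})"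

end

theory Submission
  imports Defs
begin

text \<open>
  Let \<open>M\<^sub>i(G) = \<bbbP>\<^sub>1(G, i \<in> \<K>) / \<bbbP>\<^sub>0(G)\<close>. The overlap of an estimator is
  \<open>\<bbbE>\<^sub>0 \<Sum>\<^bsub>i \<in> est G\<^esub> M\<^sub>i(G)\<close>, so by Cauchy-Schwarz its square is at most
  \<open>K \<cdot> \<bbbE>\<^sub>0 \<Sum>\<^sub>i M\<^sub>i(G)\<^sup>2\<close>. Writing \<open>M\<^sub>i\<close> as an average over placements \<open>\<sigma>\<close> of the
  likelihood ratios \<open>W\<^sub>\<sigma>\<close> of planting \<open>\<Gamma>\<close> at \<open>\<sigma>\<close>, the last expectation is the average over
  pairs \<open>(\<sigma>, \<tau>)\<close> of \<open>|V\<^sub>\<sigma> \<inter> V\<^sub>\<tau>| \<cdot> \<bbbE>\<^sub>0[W\<^sub>\<sigma> W\<^sub>\<tau>]\<close>. Since \<open>\<bbbE>\<^sub>0[W\<^sub>\<sigma> W\<^sub>\<tau>] \<ge> 1\<close> and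
  \<open>|V\<^sub>\<sigma> \<inter> V\<^sub>\<tau>| \<le> K\<close>, it is at most the average of \<open>|V\<^sub>\<sigma> \<inter> V\<^sub>\<tau>|\<close>, which is \<open>K\<^sup>2/n\<close> by
  symmetry, plus \<open>K (\<bbbE>\<^sub>0 L\<^sup>2 - 1)\<close>. Hence \<open>ov\<^sup>2 \<le> K\<^sup>2 (K/n + \<bbbE>\<^sub>0 L\<^sup>2 - 1) = o(K\<^sup>2)\<close>.
\<close>

section \<open>Finite probability mass functions\<close>

lemma pmf_map_inj_on_superset:
  assumes "inj_on f D" "set_pmf M \<subseteq> D" "x \<in> D"
  shows "pmf (map_pmf f M) (f x) = pmf M x"
proof -
  have "f -` {f x} \<inter> set_pmf M = {x} \<inter> set_pmf M"
    using assms by (auto simp: inj_on_def)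
  then show ?thesis
    by (metis measure_Int_set_pmf measure_pmf_single pmf_map)
qed

lemma measure_pmf_eq_sum_finite_support:
  assumes "finite X" "set_pmf M \<subseteq> X"
  shows "measure_pmf.prob M B = (\<Sum>x\<in>X. pmf M x * indicator B x)"
proof -
  have "measure_pmf.prob M B = measure_pmf.prob M (B \<inter> X)"
    using assms(2) by (metis inf.absorb_iff2 inf_assoc inf_commute measure_Int_set_pmf)
  also have "\<dots> = (\<Sum>x\<in>X. pmf M x * indicator B x)"
    using assms(1)
    by (simp add: measure_measure_pmf_finite sum.inter_restrict indicator_def if_distrib Int_commute
        cong: if_cong)
  finally show ?thesis .
qed

lemma expectation_eq_sum_finite_support:
  assumes "finite X" "set_pmf M \<subseteq> X"
  shows "measure_pmf.expectation M (f :: _ \<Rightarrow> real) = (\<Sum>x\<in>X. pmf M x * f x)"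
  using assms by (subst integral_measure_pmf_real[of X]) (auto simp: mult.commute)

lemma measure_bind_pmf_of_set:
  assumes "finite I" "I \<noteq> {}" "finite X" "\<And>s. s \<in> I \<Longrightarrow> set_pmf (F s) \<subseteq> X"
  shows "measure_pmf.prob (bind_pmf (pmf_of_set I) F) A = (\<Sum>s\<in>I. measure_pmf.prob (F s) A) / card I"
proof -
  have "set_pmf (bind_pmf (pmf_of_set I) F) \<subseteq> X"
    using assms by auto
  then have "measure_pmf.prob (bind_pmf (pmf_of_set I) F) A
      = (\<Sum>x\<in>X. (\<Sum>s\<in>I. pmf (F s) x) / card I * indicator A x)"
    using assms by (simp add: measure_pmf_eq_sum_finite_support pmf_bind integral_pmf_of_set)
  also have "\<dots> = (\<Sum>s\<in>I. \<Sum>x\<in>X. pmf (F s) x * indicator A x) / card I"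
    by (simp add: sum_divide_distrib sum_distrib_right sum.swap[of _ X])
  also have "\<dots> = (\<Sum>s\<in>I. measure_pmf.prob (F s) A) / card I"
    using assms by (simp add: measure_pmf_eq_sum_finite_support)
  finally show ?thesis .
qed

lemma pmf_Pi_pmf_subset:
  assumes "finite E"
  shows "pmf (map_pmf (\<lambda>f. {e\<in>E. f e}) (Pi_pmf E False q)) G =
         (if G \<subseteq> E then \<Prod>e\<in>E. pmf (q e) (e \<in> G) else 0)"
proof (cases "G \<subseteq> E")
  case True
  define D where "D = {f. \<forall>x. x \<notin> E \<longrightarrow> f x = False}"
  have "inj_on (\<lambda>f. {e\<in>E. f e}) D"
    unfolding D_def inj_on_def by (auto simp: set_eq_iff fun_eq_iff)
  moreover have "set_pmf (Pi_pmf E False q) \<subseteq> D"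
    unfolding D_def using assms by (rule set_Pi_pmf_subset)
  moreover have "(\<lambda>x. x \<in> G) \<in> D"
    using True unfolding D_def by auto
  ultimately have "pmf (map_pmf (\<lambda>f. {e\<in>E. f e}) (Pi_pmf E False q)) {e\<in>E. e \<in> G}
      = pmf (Pi_pmf E False q) (\<lambda>x. x \<in> G)"
    by (rule pmf_map_inj_on_superset)
  moreover have "{e\<in>E. e \<in> G} = G"
    using True by auto
  moreover have "pmf (Pi_pmf E False q) (\<lambda>x. x \<in> G) = (\<Prod>e\<in>E. pmf (q e) (e \<in> G))"
    using True assms by (subst pmf_Pi) auto
  ultimately show ?thesis
    using True by simp
next
  case False
  then have "G \<notin> set_pmf (map_pmf (\<lambda>f. {e\<in>E. f e}) (Pi_pmf E False q))"
    by auto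
  then show ?thesis
    using False by (simp add: set_pmf_eq)
qed

lemma Pi_pmf_map_dependent:
  assumes "finite A"
  shows "Pi_pmf A False (\<lambda>x. map_pmf (h x) (g x)) =
         map_pmf (\<lambda>f x. if x \<in> A then h x (f x) else False) (Pi_pmf A False g)"
proof -
  have "Pi_pmf A False (\<lambda>x. map_pmf (h x) (g x)) =
        Pi_pmf A False g \<bind> (\<lambda>f. Pi_pmf A False (\<lambda>x. return_pmf (h x (f x))))"
    unfolding map_pmf_def by (rule Pi_pmf_bind[OF assms])
  also have "\<dots> = map_pmf (\<lambda>f x. if x \<in> A then h x (f x) else False) (Pi_pmf A False g)"
    using assms by (simp add: map_pmf_def)
  finally show ?thesis .
qed

lemma weighted_Cauchy_Schwarz:
  fixes w a b :: "'a \<Rightarrow> real"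
  assumes "\<And>x. x \<in> X \<Longrightarrow> 0 \<le> w x"
  shows "(\<Sum>x\<in>X. w x * a x * b x)\<^sup>2 \<le> (\<Sum>x\<in>X. w x * (a x)\<^sup>2) * (\<Sum>x\<in>X. w x * (b x)\<^sup>2)"
proof -
  have "(\<Sum>x\<in>X. (sqrt (w x) * a x) * (sqrt (w x) * b x))\<^sup>2 \<le>
        (\<Sum>x\<in>X. (sqrt (w x) * a x)\<^sup>2) * (\<Sum>x\<in>X. (sqrt (w x) * b x)\<^sup>2)"
    by (rule Cauchy_Schwarz_ineq_sum)
  also have "(\<Sum>x\<in>X. (sqrt (w x) * a x) * (sqrt (w x) * b x)) = (\<Sum>x\<in>X. w x * a x * b x)"
    using assms by (intro sum.cong) (auto simp: algebra_simps)
  also have "(\<Sum>x\<in>X. (sqrt (w x) * a x)\<^sup>2) = (\<Sum>x\<in>X. w x * (a x)\<^sup>2)"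
    using assms by (intro sum.cong) (auto simp: power_mult_distrib)
  also have "(\<Sum>x\<in>X. (sqrt (w x) * b x)\<^sup>2) = (\<Sum>x\<in>X. w x * (b x)\<^sup>2)"
    using assms by (intro sum.cong) (auto simp: power_mult_distrib)
  finally show ?thesis .
qed

lemma sum_indicators_eq_card_Int:
  assumes "finite U" "A \<subseteq> U"
  shows "(\<Sum>i\<in>U. of_bool (i \<in> A) * of_bool (i \<in> B)) = real (card (A \<inter> B))"
proof -
  have "(\<Sum>i\<in>U. of_bool (i \<in> A) * of_bool (i \<in> B)) = (\<Sum>i\<in>U. of_bool (i \<in> A \<inter> B) :: real)"
    by (intro sum.cong) auto
  also have "\<dots> = real (card (U \<inter> (A \<inter> B)))"
    using assms(1) by (simp add: Int_def)
  also have "U \<inter> (A \<inter> B) = A \<inter> B"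
    using assms(2) by blast
  finally show ?thesis .
qed

section \<open>Erdos-Renyi graphs and planted edge sets\<close>

lemma finite_graph_edges: "finite (graph_edges n)"
  unfolding graph_edges_def by (rule finite_subset[of _ "Pow {0..<n}"]) auto

lemma set_pmf_ER_pmf: "set_pmf (ER_pmf n p) \<subseteq> Pow (graph_edges n)"
  unfolding ER_pmf_def by auto

lemma pmf_ER_pmf:
  assumes "0 \<le> p" "p \<le> 1"
  shows "pmf (ER_pmf n p) G =
    (if G \<subseteq> graph_edges n then \<Prod>e\<in>graph_edges n. if e \<in> G then p else 1 - p else 0)"
  unfolding ER_pmf_def using assms
  by (subst pmf_Pi_pmf_subset[OF finite_graph_edges]) (auto intro!: prod.cong)

lemma prob_ER_pmf_superset:
  assumes "T \<subseteq> graph_edges n" "0 \<le> p" "p \<le> 1"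
  shows "measure_pmf.prob (ER_pmf n p) {G. T \<subseteq> G} = p ^ card T"
proof -
  let ?E = "graph_edges n"
  let ?B = "\<lambda>e. if e \<in> T then {True} else UNIV"
  have "(\<lambda>f. {e\<in>?E. f e}) -` {G. T \<subseteq> G} = Pi ?E ?B"
    using assms(1) by (auto simp: Pi_def)
  then have "measure_pmf.prob (ER_pmf n p) {G. T \<subseteq> G} =
      measure_pmf.prob (Pi_pmf ?E False (\<lambda>_. bernoulli_pmf p)) (Pi ?E ?B)"
    unfolding ER_pmf_def by simp
  also have "\<dots> = (\<Prod>e\<in>?E. measure_pmf.prob (bernoulli_pmf p) (?B e))"
    by (rule measure_Pi_pmf_Pi[OF finite_graph_edges])
  also have "\<dots> = (\<Prod>e\<in>?E. if e \<in> T then p else 1)"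
    using assms by (intro prod.cong) (auto simp: measure_pmf_single)
  also have "\<dots> = p ^ card T"
    using assms(1) finite_graph_edges[of n] by (simp add: prod.If_cases Int_absorb1)
  finally show ?thesis .
qed

text \<open>Adding \<open>S\<close> to \<open>G(n,p)\<close> amounts to forcing the coins of the edges in \<open>S\<close> to come up heads.\<close>

lemma pmf_ER_pmf_Un:
  assumes S: "S \<subseteq> graph_edges n" and p: "0 < p" "p \<le> 1"
  shows "pmf (map_pmf (\<lambda>G0. G0 \<union> S) (ER_pmf n p)) G =
    (if S \<subseteq> G then pmf (ER_pmf n p) G / p ^ card S else 0)"
proof -
  let ?E = "graph_edges n"
  let ?q = "\<lambda>e. map_pmf (\<lambda>b. b \<or> e \<in> S) (bernoulli_pmf p)"
  let ?coin = "\<lambda>e. if e \<in> G then p else 1 - p"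
  have q: "pmf (?q e) b = (if e \<in> S then of_bool b else ?coin e)" if "b \<longleftrightarrow> e \<in> G" for e b
    using p that by (cases "e \<in> S") (simp_all add: map_pmf_def bind_return_pmf' indicator_def)
  have "map_pmf (\<lambda>G0. G0 \<union> S) (ER_pmf n p) =
      map_pmf (\<lambda>f. {e\<in>?E. f e}) (Pi_pmf ?E False ?q)"
    unfolding ER_pmf_def
    by (subst Pi_pmf_map_dependent[OF finite_graph_edges])
       (auto simp: map_pmf_comp intro!: map_pmf_cong dest: subsetD[OF S])
  then have lhs: "pmf (map_pmf (\<lambda>G0. G0 \<union> S) (ER_pmf n p)) G =
      (if G \<subseteq> ?E then \<Prod>e\<in>?E. pmf (?q e) (e \<in> G) else 0)"
    by (simp add: pmf_Pi_pmf_subset[OF finite_graph_edges])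
  have split: "(\<Prod>e\<in>?E. f e) = (\<Prod>e\<in>S. f e) * (\<Prod>e\<in>?E - S. f e)" for f :: "nat set \<Rightarrow> real"
    using S finite_graph_edges by (metis mult.commute prod.subset_diff)
  show ?thesis
  proof (cases "G \<subseteq> ?E \<and> S \<subseteq> G")
    case True
    have "(\<Prod>e\<in>S. pmf (?q e) (e \<in> G)) = 1" and "(\<Prod>e\<in>S. ?coin e) = p ^ card S"
      using True by (auto simp: q subset_iff intro!: prod.neutral)
    moreover have "(\<Prod>e\<in>?E - S. pmf (?q e) (e \<in> G)) = (\<Prod>e\<in>?E - S. ?coin e)"
      using p by (intro prod.cong) (auto simp: q)
    ultimately show ?thesis
      using True p lhs split[of "\<lambda>e. pmf (?q e) (e \<in> G)"] split[of ?coin] by (simp add: pmf_ER_pmf)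
  next
    case False
    then consider "\<not> G \<subseteq> ?E" | e where "e \<in> S" "e \<notin> G"
      by auto
    then show ?thesis
    proof cases
      case 1
      then show ?thesis
        using lhs S p by (auto simp: pmf_ER_pmf)
    next
      case 2
      then have "(\<Prod>e\<in>?E. pmf (?q e) (e \<in> G)) = 0"
        using S by (intro prod_zero[OF finite_graph_edges]) (auto simp: q)
      then show ?thesis
        using lhs 2 by auto
    qed
  qed
qed

section \<open>Injections of the pattern into the vertex set\<close>

lemma finite_injs: "finite (injs K n)"
  unfolding injs_def by (rule finite_subset[of _ "{0..<K} \<rightarrow>\<^sub>E {0..<n}"]) (auto intro: finite_PiE)

lemma injs_nonempty: "K \<le> n \<Longrightarrow> injs K n \<noteq> {}"
  using restrict_PiE_iff[of id "{0..<K}" "\<lambda>_. {0..<n}"]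
  unfolding injs_def by (auto intro!: exI[of _ "restrict id {0..<K}"])

lemma injsD:
  assumes "\<sigma> \<in> injs K n"
  shows "inj_on \<sigma> {0..<K}" "\<sigma> ` {0..<K} \<subseteq> {0..<n}"
  using assms unfolding injs_def by auto

lemma card_image_injs: "\<sigma> \<in> injs K n \<Longrightarrow> card (\<sigma> ` {0..<K}) = K"
  by (simp add: card_image injsD)

lemma embed_edges_subset_graph_edges:
  assumes "\<sigma> \<in> injs K n" "\<Gamma> \<subseteq> graph_edges K"
  shows "embed_edges \<sigma> \<Gamma> \<subseteq> graph_edges n"
proof
  fix x assume "x \<in> embed_edges \<sigma> \<Gamma>"
  then obtain e where e: "e \<in> \<Gamma>" "x = \<sigma> ` e"
    unfolding embed_edges_def by auto
  then have "e \<subseteq> {0..<K}" "card e = 2"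
    using assms(2) unfolding graph_edges_def by auto
  moreover have "inj_on \<sigma> e"
    using injsD(1)[OF assms(1)] \<open>e \<subseteq> {0..<K}\<close> by (rule inj_on_subset)
  ultimately show "x \<in> graph_edges n"
    using injsD(2)[OF assms(1)] e unfolding graph_edges_def by (auto simp: card_image)
qed

text \<open>Composing with the transposition of \<open>i\<close> and \<open>j\<close> is an involution of \<open>injs K n\<close>
  exchanging the injections whose image contains \<open>i\<close> with those whose image contains \<open>j\<close>.\<close>

lemma card_injs_hitting_eq:
  assumes "i < n" "j < n"
  shows "card {\<sigma> \<in> injs K n. i \<in> \<sigma> ` {0..<K}} = card {\<sigma> \<in> injs K n. j \<in> \<sigma> ` {0..<K}}"
proof (rule bij_betw_same_card)
  let ?\<tau> = "\<lambda>\<sigma>. restrict (Transposition.transpose i j \<circ> \<sigma>) {0..<K}"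
  have closed: "?\<tau> \<sigma> \<in> injs K n" if "\<sigma> \<in> injs K n" for \<sigma>
  proof -
    have "inj_on (Transposition.transpose i j \<circ> \<sigma>) {0..<K}"
      using injsD(1)[OF that] by (simp add: comp_inj_on)
    moreover have "Transposition.transpose i j (\<sigma> x) \<in> {0..<n}" if "x \<in> {0..<K}" for x
      using injsD(2)[OF \<open>\<sigma> \<in> injs K n\<close>] that assms
      by (auto simp: Transposition.transpose_def image_subset_iff)
    ultimately show ?thesis
      unfolding injs_def by (simp add: inj_on_restrict_eq)
  qed
  have invol: "?\<tau> (?\<tau> \<sigma>) = \<sigma>" if "\<sigma> \<in> injs K n" for \<sigma>
    using that unfolding injs_def by (auto simp: PiE_def extensional_def fun_eq_iff)
  have swap: "j \<in> ?\<tau> \<sigma> ` {0..<K} \<longleftrightarrow> i \<in> \<sigma> ` {0..<K}"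
    and swap': "i \<in> ?\<tau> \<sigma> ` {0..<K} \<longleftrightarrow> j \<in> \<sigma> ` {0..<K}" for \<sigma>
  proof -
    have "?\<tau> \<sigma> ` {0..<K} = Transposition.transpose i j ` \<sigma> ` {0..<K}"
      by (simp only: image_restrict_eq image_comp)
    then show "j \<in> ?\<tau> \<sigma> ` {0..<K} \<longleftrightarrow> i \<in> \<sigma> ` {0..<K}"
      and "i \<in> ?\<tau> \<sigma> ` {0..<K} \<longleftrightarrow> j \<in> \<sigma> ` {0..<K}"
      by (simp_all only: in_transpose_image_iff transpose_apply_first transpose_apply_second)
  qed
  show "bij_betw ?\<tau> {\<sigma> \<in> injs K n. i \<in> \<sigma> ` {0..<K}} {\<sigma> \<in> injs K n. j \<in> \<sigma> ` {0..<K}}"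
    by (rule bij_betw_byWitness[where f' = ?\<tau>]) (use closed invol swap swap' in blast)+
qed

lemma card_injs_hitting:
  assumes "i < n"
  shows "n * card {\<sigma> \<in> injs K n. i \<in> \<sigma> ` {0..<K}} = card (injs K n) * K"
proof -
  have "card (injs K n) * K = (\<Sum>\<sigma>\<in>injs K n. card ({0..<n} \<inter> \<sigma> ` {0..<K}))"
    by (simp add: Int_absorb1 injsD(2) card_image_injs)
  also have "\<dots> = (\<Sum>j\<in>{0..<n}. \<Sum>\<sigma>\<in>injs K n. of_bool (j \<in> \<sigma> ` {0..<K}))"
    by (subst sum.swap) (simp add: Int_def)
  also have "\<dots> = (\<Sum>j\<in>{0..<n}. card {\<sigma> \<in> injs K n. j \<in> \<sigma> ` {0..<K}})"
    using finite_injs by (simp add: Int_def)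
  also have "\<dots> = (\<Sum>j\<in>{0..<n}. card {\<sigma> \<in> injs K n. i \<in> \<sigma> ` {0..<K}})"
    using card_injs_hitting_eq[OF assms] by (intro sum.cong) auto
  finally show ?thesis
    by simp
qed

section \<open>The second-moment bound on the overlap\<close>

locale planted_subgraph =
  fixes n :: nat and p :: real and K :: nat and \<Gamma> :: "nat set set"
    and est :: "nat set set \<Rightarrow> nat set"
  assumes p_pos: "0 < p" and p_le_1: "p \<le> 1" and K_le_n: "K \<le> n" and n_pos: "0 < n"
    and \<Gamma>_edges: "\<Gamma> \<subseteq> graph_edges K"
    and est_valid: "\<And>G. G \<subseteq> graph_edges n \<Longrightarrow> est G \<subseteq> {0..<n} \<and> card (est G) = K"
begin

abbreviation graphs :: "nat set set set" where "graphs \<equiv> Pow (graph_edges n)"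
abbreviation embs :: "(nat \<Rightarrow> nat) set" where "embs \<equiv> injs K n"
abbreviation num_embs :: real where "num_embs \<equiv> real (card (injs K n))"
abbreviation P0 :: "nat set set \<Rightarrow> real" where "P0 G \<equiv> pmf (ER_pmf n p) G"
abbreviation EL2 :: real where
  "EL2 \<equiv> measure_pmf.expectation (ER_pmf n p) (\<lambda>G. (likelihood_ratio n p K \<Gamma> G)\<^sup>2)"

definition copy :: "(nat \<Rightarrow> nat) \<Rightarrow> nat set set" where "copy \<sigma> = embed_edges \<sigma> \<Gamma>"
definition verts :: "(nat \<Rightarrow> nat) \<Rightarrow> nat set" where "verts \<sigma> = \<sigma> ` {0..<K}"

abbreviation shared :: "(nat \<Rightarrow> nat) \<Rightarrow> (nat \<Rightarrow> nat) \<Rightarrow> nat" where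
  "shared \<sigma> \<tau> \<equiv> card (verts \<sigma> \<inter> verts \<tau>)"

text \<open>With \<open>\<bbbP>\<^sub>\<sigma>\<close> the law of \<open>G\<close> given the placement \<open>\<sigma>\<close>:
  \<open>plant_ratio \<sigma> G = \<bbbP>\<^sub>\<sigma>(G) / \<bbbP>\<^sub>0(G)\<close>, \<open>lr G = L(G)\<close> and
  \<open>vertex_lr i G = \<bbbP>\<^sub>1(G, i \<in> \<K>) / \<bbbP>\<^sub>0(G)\<close>.\<close>

definition plant_ratio :: "(nat \<Rightarrow> nat) \<Rightarrow> nat set set \<Rightarrow> real" where
  "plant_ratio \<sigma> G = (if copy \<sigma> \<subseteq> G then 1 / p ^ card (copy \<sigma>) else 0)"

definition lr :: "nat set set \<Rightarrow> real" where
  "lr G = (\<Sum>\<sigma>\<in>embs. plant_ratio \<sigma> G) / num_embs"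

definition vertex_lr :: "nat \<Rightarrow> nat set set \<Rightarrow> real" where
  "vertex_lr i G = (\<Sum>\<sigma>\<in>embs. plant_ratio \<sigma> G * of_bool (i \<in> verts \<sigma>)) / num_embs"

definition vertex_moment :: real where
  "vertex_moment = (\<Sum>G\<in>graphs. \<Sum>i\<in>{0..<n}. P0 G * (vertex_lr i G)\<^sup>2)"

definition cross_moment :: "(nat \<Rightarrow> nat) \<Rightarrow> (nat \<Rightarrow> nat) \<Rightarrow> real" where
  "cross_moment \<sigma> \<tau> = (\<Sum>G\<in>graphs. P0 G * plant_ratio \<sigma> G * plant_ratio \<tau> G)"

lemma finite_graphs: "finite graphs"
  by (simp add: finite_graph_edges)

lemma num_embs_pos: "0 < num_embs"
  using finite_injs injs_nonempty[OF K_le_n] by (simp add: card_gt_0_iff)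

lemma copy_subset: "\<sigma> \<in> embs \<Longrightarrow> copy \<sigma> \<subseteq> graph_edges n"
  unfolding copy_def using \<Gamma>_edges by (simp add: embed_edges_subset_graph_edges)

lemma verts_subset: "\<sigma> \<in> embs \<Longrightarrow> verts \<sigma> \<subseteq> {0..<n}"
  unfolding verts_def by (rule injsD(2))

lemma card_verts: "\<sigma> \<in> embs \<Longrightarrow> card (verts \<sigma>) = K"
  unfolding verts_def by (rule card_image_injs)

lemma plant_ratio_nonneg: "0 \<le> plant_ratio \<sigma> G"
  unfolding plant_ratio_def using p_pos by simp

lemma sum_P0: "(\<Sum>G\<in>graphs. P0 G) = 1"
  using finite_graphs set_pmf_ER_pmf[of n p]
  by (simp add: measure_measure_pmf_finite[symmetric] measure_pmf.prob_eq_1 AE_measure_pmf_iff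
      subset_iff)

lemma planted_pmf_eq:
  "planted_pmf n p K \<Gamma> =
     pmf_of_set embs \<bind> (\<lambda>\<sigma>. map_pmf (\<lambda>G0. (G0 \<union> copy \<sigma>, verts \<sigma>)) (ER_pmf n p))"
  unfolding planted_pmf_def copy_def verts_def
  by (subst bind_commute_pmf) (simp add: map_pmf_def)

lemma pmf_plant_copy:
  "\<sigma> \<in> embs \<Longrightarrow> pmf (map_pmf (\<lambda>G0. G0 \<union> copy \<sigma>) (ER_pmf n p)) G = P0 G * plant_ratio \<sigma> G"
  unfolding plant_ratio_def using pmf_ER_pmf_Un[OF copy_subset p_pos p_le_1] by simp

lemma prob_planted_vertex:
  "measure_pmf.prob (planted_pmf n p K \<Gamma>) {(G, T). i \<in> est G \<inter> T} =
     (\<Sum>G\<in>graphs. P0 G * of_bool (i \<in> est G) * vertex_lr i G)"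
proof -
  let ?F = "\<lambda>\<sigma>. map_pmf (\<lambda>G0. (G0 \<union> copy \<sigma>, verts \<sigma>)) (ER_pmf n p)"
  let ?event = "{(G, T). i \<in> est G \<inter> T}"
  have prob_F: "measure_pmf.prob (?F \<sigma>) ?event =
      (\<Sum>G\<in>graphs. P0 G * plant_ratio \<sigma> G * of_bool (i \<in> est G) * of_bool (i \<in> verts \<sigma>))"
    if "\<sigma> \<in> embs" for \<sigma>
  proof -
    have "measure_pmf.prob (?F \<sigma>) ?event =
        measure_pmf.prob (map_pmf (\<lambda>G0. G0 \<union> copy \<sigma>) (ER_pmf n p)) {G. i \<in> est G \<inter> verts \<sigma>}"
      by (simp add: vimage_def case_prod_beta flip: Collect_conj_eq)
    also have "\<dots> = (\<Sum>G\<in>graphs. pmf (map_pmf (\<lambda>G0. G0 \<union> copy \<sigma>) (ER_pmf n p)) G *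
        indicator {G. i \<in> est G \<inter> verts \<sigma>} G)"
      using set_pmf_ER_pmf[of n p] copy_subset[OF that]
      by (intro measure_pmf_eq_sum_finite_support finite_graphs) auto
    finally show ?thesis
      using that by (simp add: pmf_plant_copy indicator_def mult.assoc)
  qed
  have "measure_pmf.prob (planted_pmf n p K \<Gamma>) ?event =
      (\<Sum>\<sigma>\<in>embs. measure_pmf.prob (?F \<sigma>) ?event) / num_embs"
    unfolding planted_pmf_eq
  proof (rule measure_bind_pmf_of_set[OF finite_injs injs_nonempty[OF K_le_n]])
    show "finite (graphs \<times> Pow {0..<n})"
      using finite_graphs by simp
    show "set_pmf (?F \<sigma>) \<subseteq> graphs \<times> Pow {0..<n}" if "\<sigma> \<in> embs" for \<sigma>
      using set_pmf_ER_pmf[of n p] copy_subset[OF that] verts_subset[OF that] by auto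
  qed
  also have "\<dots> = (\<Sum>\<sigma>\<in>embs. \<Sum>G\<in>graphs.
      P0 G * plant_ratio \<sigma> G * of_bool (i \<in> est G) * of_bool (i \<in> verts \<sigma>)) / num_embs"
    by (simp only: prob_F cong: sum.cong)
  also have "\<dots> = (\<Sum>G\<in>graphs. P0 G * of_bool (i \<in> est G) * vertex_lr i G)"
    unfolding vertex_lr_def
    by (simp add: sum.swap[of _ embs] sum_divide_distrib sum_distrib_left mult_ac)
  finally show ?thesis .
qed

lemma overlap_eq:
  "overlap n p K \<Gamma> est = (\<Sum>G\<in>graphs. \<Sum>i\<in>{0..<n}. P0 G * of_bool (i \<in> est G) * vertex_lr i G)"
  unfolding overlap_def prob_planted_vertex by (rule sum.swap)

lemma pmf_planted_graph: "pmf (map_pmf fst (planted_pmf n p K \<Gamma>)) G = P0 G * lr G"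
proof -
  have "map_pmf fst (planted_pmf n p K \<Gamma>) =
      pmf_of_set embs \<bind> (\<lambda>\<sigma>. map_pmf (\<lambda>G0. G0 \<union> copy \<sigma>) (ER_pmf n p))"
    unfolding planted_pmf_eq by (simp add: map_bind_pmf map_pmf_comp)
  then show ?thesis
    using finite_injs injs_nonempty[OF K_le_n]
    by (simp add: pmf_bind integral_pmf_of_set pmf_plant_copy lr_def sum_distrib_left)
qed

lemma EL2_eq:
  "EL2 =
     (\<Sum>\<sigma>\<in>embs. \<Sum>\<tau>\<in>embs. cross_moment \<sigma> \<tau>) / num_embs\<^sup>2"
proof -
  have "EL2 =
      (\<Sum>G\<in>graphs. P0 G * (likelihood_ratio n p K \<Gamma> G)\<^sup>2)"
    using finite_graphs set_pmf_ER_pmf by (rule expectation_eq_sum_finite_support)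
  also have "\<dots> = (\<Sum>G\<in>graphs. P0 G * (lr G)\<^sup>2)"
    by (intro sum.cong) (auto simp: likelihood_ratio_def pmf_planted_graph)
  also have "\<dots> = (\<Sum>G\<in>graphs. \<Sum>\<sigma>\<in>embs. \<Sum>\<tau>\<in>embs.
      P0 G * plant_ratio \<sigma> G * plant_ratio \<tau> G / num_embs\<^sup>2)"
    unfolding lr_def
    by (simp add: power2_eq_square sum_product sum_divide_distrib sum_distrib_left mult_ac)
  also have "\<dots> = (\<Sum>\<sigma>\<in>embs. \<Sum>\<tau>\<in>embs. cross_moment \<sigma> \<tau>) / num_embs\<^sup>2"
    unfolding cross_moment_def by (simp add: sum.swap[of _ graphs] sum_divide_distrib)
  finally show ?thesis .
qed

lemma cross_moment_ge_1:
  assumes "\<sigma> \<in> embs" "\<tau> \<in> embs"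
  shows "1 \<le> cross_moment \<sigma> \<tau>"
proof -
  have "cross_moment \<sigma> \<tau> = (\<Sum>G\<in>graphs. P0 G * indicator {G. copy \<sigma> \<union> copy \<tau> \<subseteq> G} G) /
      (p ^ card (copy \<sigma>) * p ^ card (copy \<tau>))"
    unfolding cross_moment_def plant_ratio_def
    by (simp add: sum_divide_distrib indicator_def) (intro sum.cong; auto)
  also have "(\<Sum>G\<in>graphs. P0 G * indicator {G. copy \<sigma> \<union> copy \<tau> \<subseteq> G} G) =
      p ^ card (copy \<sigma> \<union> copy \<tau>)"
    using measure_pmf_eq_sum_finite_support[OF finite_graphs set_pmf_ER_pmf, symmetric]
      prob_ER_pmf_superset[of "copy \<sigma> \<union> copy \<tau>"] copy_subset[OF assms(1)] copy_subset[OF assms(2)]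
      p_pos p_le_1
    by simp
  finally have "cross_moment \<sigma> \<tau> =
      p ^ card (copy \<sigma> \<union> copy \<tau>) / (p ^ card (copy \<sigma>) * p ^ card (copy \<tau>))" .
  moreover have "p ^ (card (copy \<sigma>) + card (copy \<tau>)) \<le> p ^ card (copy \<sigma> \<union> copy \<tau>)"
    using p_pos p_le_1 card_Un_le by (intro power_decreasing) auto
  ultimately show ?thesis
    using p_pos by (simp add: power_add)
qed

lemma vertex_lr_nonneg: "0 \<le> vertex_lr i G"
  unfolding vertex_lr_def using plant_ratio_nonneg by (simp add: sum_nonneg)

lemma overlap_nonneg: "0 \<le> overlap n p K \<Gamma> est"
  unfolding overlap_eq using vertex_lr_nonneg by (simp add: sum_nonneg)

lemma overlap_sq_le: "(overlap n p K \<Gamma> est)\<^sup>2 \<le> K * vertex_moment"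
proof -
  let ?X = "graphs \<times> {0..<n}"
  let ?hit = "\<lambda>x. of_bool (snd x \<in> est (fst x)) :: real"
  have size_est: "(\<Sum>i\<in>{0..<n}. of_bool (i \<in> est G)) = real K" if "G \<in> graphs" for G
    using est_valid[of G] that by (simp add: Int_absorb1 Int_def[symmetric])
  have hit_sq: "(of_bool b :: real)\<^sup>2 = of_bool b" for b
    by (cases b) simp_all
  have "(overlap n p K \<Gamma> est)\<^sup>2 = (\<Sum>x\<in>?X. P0 (fst x) * ?hit x * vertex_lr (snd x) (fst x))\<^sup>2"
    unfolding overlap_eq by (simp add: sum.cartesian_product case_prod_beta)
  also have "\<dots> \<le> (\<Sum>x\<in>?X. P0 (fst x) * (?hit x)\<^sup>2) *
      (\<Sum>x\<in>?X. P0 (fst x) * (vertex_lr (snd x) (fst x))\<^sup>2)"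
    by (rule weighted_Cauchy_Schwarz) simp
  also have "(\<Sum>x\<in>?X. P0 (fst x) * (?hit x)\<^sup>2) =
      (\<Sum>G\<in>graphs. P0 G * (\<Sum>i\<in>{0..<n}. of_bool (i \<in> est G)))"
    by (simp only: sum.cartesian_product' hit_sq fst_conv snd_conv sum_distrib_left)
  also have "\<dots> = (\<Sum>G\<in>graphs. P0 G * real K)"
    by (simp only: size_est cong: sum.cong)
  also have "\<dots> = K"
    by (simp add: sum_distrib_right[symmetric] sum_P0)
  also have "(\<Sum>x\<in>?X. P0 (fst x) * (vertex_lr (snd x) (fst x))\<^sup>2) = vertex_moment"
    unfolding vertex_moment_def by (simp add: sum.cartesian_product case_prod_beta)
  finally show ?thesis .
qed

lemma sum_vertex_lr_sq:
  "(\<Sum>i\<in>{0..<n}. (vertex_lr i G)\<^sup>2) =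
     (\<Sum>\<sigma>\<in>embs. \<Sum>\<tau>\<in>embs. plant_ratio \<sigma> G * plant_ratio \<tau> G * shared \<sigma> \<tau>) / num_embs\<^sup>2"
proof -
  have "(vertex_lr i G)\<^sup>2 = (\<Sum>\<sigma>\<in>embs. \<Sum>\<tau>\<in>embs. plant_ratio \<sigma> G * plant_ratio \<tau> G *
      (of_bool (i \<in> verts \<sigma>) * of_bool (i \<in> verts \<tau>))) / num_embs\<^sup>2" for i
    unfolding vertex_lr_def power_divide by (simp add: power2_eq_square sum_product mult_ac)
  then have "(\<Sum>i\<in>{0..<n}. (vertex_lr i G)\<^sup>2) =
      (\<Sum>\<sigma>\<in>embs. \<Sum>\<tau>\<in>embs. plant_ratio \<sigma> G * plant_ratio \<tau> G *
        (\<Sum>i\<in>{0..<n}. of_bool (i \<in> verts \<sigma>) * of_bool (i \<in> verts \<tau>))) / num_embs\<^sup>2"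
    by (simp only: sum_divide_distrib[symmetric] sum.swap[of _ "{0..<n}"] sum_distrib_left)
  also have "\<dots> = (\<Sum>\<sigma>\<in>embs. \<Sum>\<tau>\<in>embs. plant_ratio \<sigma> G * plant_ratio \<tau> G * shared \<sigma> \<tau>) / num_embs\<^sup>2"
    by (intro sum.cong arg_cong2[of _ _ _ _ "(/)"] refl)
       (simp only: sum_indicators_eq_card_Int[OF finite_atLeastLessThan verts_subset])
  finally show ?thesis .
qed

lemma vertex_moment_eq:
  "vertex_moment = (\<Sum>\<sigma>\<in>embs. \<Sum>\<tau>\<in>embs. shared \<sigma> \<tau> * cross_moment \<sigma> \<tau>) / num_embs\<^sup>2"
proof -
  have "vertex_moment = (\<Sum>G\<in>graphs. \<Sum>\<sigma>\<in>embs. \<Sum>\<tau>\<in>embs.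
      shared \<sigma> \<tau> * (P0 G * plant_ratio \<sigma> G * plant_ratio \<tau> G)) / num_embs\<^sup>2"
    unfolding vertex_moment_def sum_distrib_left[symmetric] sum_vertex_lr_sq
    by (simp add: sum_distrib_left sum_divide_distrib mult_ac)
  also have "\<dots> = (\<Sum>\<sigma>\<in>embs. \<Sum>\<tau>\<in>embs. shared \<sigma> \<tau> * cross_moment \<sigma> \<tau>) / num_embs\<^sup>2"
    unfolding cross_moment_def by (simp only: sum.swap[of _ graphs] sum_distrib_left)
  finally show ?thesis .
qed

lemma sum_shared:
  "(\<Sum>\<sigma>\<in>embs. \<Sum>\<tau>\<in>embs. real (shared \<sigma> \<tau>)) = num_embs\<^sup>2 * K\<^sup>2 / n"
proof -
  have hitting: "(\<Sum>\<sigma>\<in>embs. of_bool (i \<in> verts \<sigma>)) = num_embs * K / n" if "i \<in> {0..<n}" for i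
    using card_injs_hitting[of i n K] that n_pos finite_injs
    by (simp add: verts_def Int_def field_simps flip: of_nat_mult)
  have "(\<Sum>\<sigma>\<in>embs. \<Sum>\<tau>\<in>embs. real (shared \<sigma> \<tau>)) =
      (\<Sum>\<sigma>\<in>embs. \<Sum>\<tau>\<in>embs. \<Sum>i\<in>{0..<n}. of_bool (i \<in> verts \<sigma>) * of_bool (i \<in> verts \<tau>))"
    by (intro sum.cong refl)
       (simp only: sum_indicators_eq_card_Int[OF finite_atLeastLessThan verts_subset])
  also have "\<dots> = (\<Sum>i\<in>{0..<n}. (\<Sum>\<sigma>\<in>embs. of_bool (i \<in> verts \<sigma>)) * (\<Sum>\<tau>\<in>embs. of_bool (i \<in> verts \<tau>)))"
    by (simp only: sum.swap[of _ _ "{0..<n}"] sum_product)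
  also have "\<dots> = num_embs\<^sup>2 * K\<^sup>2 / n"
    using n_pos by (simp add: hitting power2_eq_square)
  finally show ?thesis .
qed

theorem overlap_sq_le_second_moment:
  "(overlap n p K \<Gamma> est)\<^sup>2 \<le> (real K)\<^sup>2 * (K / n + (EL2 - 1))"
proof -
  have pointwise: "shared \<sigma> \<tau> * cross_moment \<sigma> \<tau> \<le> shared \<sigma> \<tau> + K * (cross_moment \<sigma> \<tau> - 1)"
    if "\<sigma> \<in> embs" "\<tau> \<in> embs" for \<sigma> \<tau>
  proof -
    have "shared \<sigma> \<tau> \<le> K"
      using card_verts[OF that(1)] verts_subset[OF that(1)]
      by (metis card_mono finite_atLeastLessThan finite_subset inf_le1)
    then have "shared \<sigma> \<tau> * (cross_moment \<sigma> \<tau> - 1) \<le> K * (cross_moment \<sigma> \<tau> - 1)"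
      using cross_moment_ge_1[OF that] by (intro mult_right_mono) auto
    then show ?thesis
      by (simp add: algebra_simps)
  qed
  have "vertex_moment \<le> (\<Sum>\<sigma>\<in>embs. \<Sum>\<tau>\<in>embs. shared \<sigma> \<tau> + K * (cross_moment \<sigma> \<tau> - 1)) / num_embs\<^sup>2"
    unfolding vertex_moment_eq by (intro divide_right_mono sum_mono pointwise) auto
  also have "\<dots> = (real K)\<^sup>2 / n + K * ((\<Sum>\<sigma>\<in>embs. \<Sum>\<tau>\<in>embs. cross_moment \<sigma> \<tau>) / num_embs\<^sup>2 - 1)"
    using num_embs_pos
    by (simp add: sum.distrib sum_subtractf sum_distrib_left sum_shared field_simps
        power2_eq_square)
  finally have "K * vertex_moment \<le> K * ((real K)\<^sup>2 / n + K * (EL2 - 1))"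
    unfolding EL2_eq by (rule mult_left_mono) simp
  with overlap_sq_le show ?thesis
    by (simp add: power2_eq_square algebra_simps)
qed

end

section \<open>Asymptotics\<close>

lemma smallo_of_sq_le:
  fixes x y \<delta> :: "'a \<Rightarrow> real"
  assumes "\<forall>\<^sub>F t in F. 0 \<le> x t \<and> (x t)\<^sup>2 \<le> (y t)\<^sup>2 * \<delta> t" and "(\<delta> \<longlongrightarrow> 0) F"
  shows "x \<in> o[F](y)"
proof (rule landau_o.smallI)
  fix c :: real
  assume "0 < c"
  then have "\<forall>\<^sub>F t in F. \<delta> t < c\<^sup>2"
    using assms(2) by (intro order_tendstoD(2)) auto
  with assms(1) show "\<forall>\<^sub>F t in F. norm (x t) \<le> c * norm (y t)"
  proof eventually_elim
    case (elim t)
    then have "(x t)\<^sup>2 \<le> (y t)\<^sup>2 * \<delta> t"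
      by simp
    also have "\<dots> \<le> (y t)\<^sup>2 * c\<^sup>2"
      using elim by (intro mult_left_mono) auto
    also have "\<dots> = (c * \<bar>y t\<bar>)\<^sup>2"
      by (simp add: power_mult_distrib)
    finally have "(x t)\<^sup>2 \<le> (c * \<bar>y t\<bar>)\<^sup>2" .
    then have "x t \<le> c * \<bar>y t\<bar>"
      by (rule power2_le_imp_le) (use \<open>0 < c\<close> in simp)
    then show ?case
      using elim by simp
  qed
qed

lemma div_tendsto_zero_if_smallo_sqrt:
  fixes f :: "nat \<Rightarrow> real"
  assumes "f \<in> o(\<lambda>n. sqrt (real n))"
  shows "(\<lambda>n. f n / real n) \<longlonglongrightarrow> 0"
proof -
  have "(\<lambda>n. f n / sqrt (real n) * sqrt (inverse (real n))) \<longlonglongrightarrow> 0 * sqrt 0"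
    using smalloD_tendsto[OF assms] lim_inverse_n by (intro tendsto_mult tendsto_real_sqrt)
  moreover have "f n / sqrt (real n) * sqrt (inverse (real n)) = f n / real n" for n
    by (simp add: real_sqrt_inverse divide_inverse mult.assoc flip: inverse_mult_distrib)
  ultimately show ?thesis
    by simp
qed

theorem theorem5:
  fixes lam :: real and K :: "nat \<Rightarrow> nat" and \<Gamma> :: "nat \<Rightarrow> nat set set"
    and est :: "nat \<Rightarrow> nat set set \<Rightarrow> nat set"
  assumes lam_pos: "lam > 0"
    and Gamma_graph: "\<And>n. \<Gamma> n \<subseteq> graph_edges (K n)"
    and K_small: "(\<lambda>n. real (K n)) \<in> o(\<lambda>n. sqrt (real n))"
    and EX_large: "filterlim (\<lambda>n. measure_pmf.expectation (ER_pmf n (lam / real n))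
                       (\<lambda>G. real (copies_count n (K n) (\<Gamma> n) G))) at_top sequentially"
    and EL2: "(\<lambda>n. measure_pmf.expectation (ER_pmf n (lam / real n))
                 (\<lambda>G. (likelihood_ratio n (lam / real n) (K n) (\<Gamma> n) G)\<^sup>2)) \<longlonglongrightarrow> 1"
    and est_valid: "\<forall>\<^sub>F n in sequentially. \<forall>G. G \<subseteq> graph_edges n \<longrightarrow>
                       est n G \<subseteq> {0..<n} \<and> card (est n G) = K n"
  shows "(\<lambda>n. overlap n (lam / real n) (K n) (\<Gamma> n) (est n)) \<in> o(\<lambda>n. real (K n))"
proof -
  let ?ov = "\<lambda>n. overlap n (lam / real n) (K n) (\<Gamma> n) (est n)"
  let ?EL2 = "\<lambda>n. measure_pmf.expectation (ER_pmf n (lam / real n))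
                 (\<lambda>G. (likelihood_ratio n (lam / real n) (K n) (\<Gamma> n) G)\<^sup>2)"
  have K_div_n: "(\<lambda>n. real (K n) / real n) \<longlonglongrightarrow> 0"
    using K_small by (rule div_tendsto_zero_if_smallo_sqrt)
  then have "\<forall>\<^sub>F n in sequentially. real (K n) / real n < 1"
    by (rule order_tendstoD) simp
  with eventually_gt_at_top[of "nat \<lceil>lam\<rceil>"] est_valid
  have "\<forall>\<^sub>F n in sequentially. planted_subgraph n (lam / real n) (K n) (\<Gamma> n) (est n)"
  proof eventually_elim
    case (elim n)
    then have "lam < real n" "K n \<le> n"
      using lam_pos by (linarith, simp add: divide_less_eq split: if_splits)
    then show ?case
      using elim(2) lam_pos Gamma_graph by unfold_locales auto
  qed
  then have "\<forall>\<^sub>F n in sequentially.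
      0 \<le> ?ov n \<and> (?ov n)\<^sup>2 \<le> (real (K n))\<^sup>2 * (K n / n + (?EL2 n - 1))"
    by (rule eventually_mono)
       (simp add: planted_subgraph.overlap_nonneg planted_subgraph.overlap_sq_le_second_moment)
  moreover have "(\<lambda>n. K n / n + (?EL2 n - 1)) \<longlonglongrightarrow> 0"
    using tendsto_add[OF K_div_n tendsto_diff[OF EL2 tendsto_const[of 1]]] by simp
  ultimately show ?thesis
    by (rule smallo_of_sq_le)
qed

end
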